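(* Let $X$ be a finite set with $|X|=n$, $0\notin X$, $W=X\cup\{0\}$. Let $\mathfrak{V}$ be a $\big(\binom{n}{2}_{\,n-2}\ \binom{n}{3}_{\,3}\big)$-configuration whose point set is $\mathcal{P}_2(X)$, and let $\mathfrak{M}$ be the structure with point set $\mathcal{P}_2(W)$ whose lines are the lines of $\mathfrak{V}$ together with all sets $\{\{0,x\},\{0,y\},\{x,y\}\}$ for distinct $x,y\in X$. If $H$ is a hyperplane of $\mathfrak{M}$, then there is a subset $A$ of $W$ such that $H=\mathcal{H}(A\,|\,W\setminus A):=\mathcal{P}_2(A)\cup\mathcal{P}_2(W\setminus A)$.
   Context: $\mathcal{P}_2(Y)$ denotes the set of $2$-element subsets of $Y$. A $(v_r\ b_k)$-configuration is a partial linear space with $v$ points and $b$ lines, each point on exactly $r$ lines and each line containing exactly $k$ points. (Every binomial partial Steiner triple system with $\binom{n+1}{2}$ points freely containing a complete graph $K_n$ is isomorphic to such an $\mathfrak{M}$.) A subspace is a set of points containing every line that meets it in at least two points; a hyperplane is a proper subspace meeting every line. *)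

theory Defs
  imports Main
begin

definition P2 :: "'a set \<Rightarrow> 'a set set" where
  "P2 Y = {e. e \<subseteq> Y \<and> card e = 2}"

definition partial_linear_space :: "'p set \<Rightarrow> 'p set set \<Rightarrow> bool" where
  "partial_linear_space P L \<longleftrightarrow>
     (\<forall>l\<in>L. l \<subseteq> P \<and> 2 \<le> card l) \<and>
     (\<forall>l\<in>L. \<forall>m\<in>L. l \<noteq> m \<longrightarrow> card (l \<inter> m) \<le> 1)"

definition configuration :: "'p set \<Rightarrow> 'p set set \<Rightarrow> nat \<Rightarrow> nat \<Rightarrow> nat \<Rightarrow> nat \<Rightarrow> bool" where
  "configuration P L v r b k \<longleftrightarrow>
     partial_linear_space P L \<and> finite P \<and> finite L \<and>
     card P = v \<and> card L = b \<and>
     (\<forall>p\<in>P. card {l\<in>L. p \<in> l} = r) \<and>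
     (\<forall>l\<in>L. card l = k)"

definition subspace :: "'p set \<Rightarrow> 'p set set \<Rightarrow> 'p set \<Rightarrow> bool" where
  "subspace P L S \<longleftrightarrow> S \<subseteq> P \<and> (\<forall>l\<in>L. 2 \<le> card (l \<inter> S) \<longrightarrow> l \<subseteq> S)"

definition hyperplane :: "'p set \<Rightarrow> 'p set set \<Rightarrow> 'p set \<Rightarrow> bool" where
  "hyperplane P L H \<longleftrightarrow> subspace P L H \<and> H \<noteq> P \<and> (\<forall>l\<in>L. l \<inter> H \<noteq> {})"

definition M_lines :: "'a \<Rightarrow> 'a set \<Rightarrow> 'a set set set \<Rightarrow> 'a set set set" where
  "M_lines z X L = L \<union> {{{z, x}, {z, y}, {x, y}} | x y. x \<in> X \<and> y \<in> X \<and> x \<noteq> y}"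

end

theory Submission
  imports Defs
begin

text \<open>Every pair \<open>{x, y}\<close> of \<open>X\<close> lies on the triangle \<open>{{z, x}, {z, y}, {x, y}}\<close>. A hyperplane
  meets this triangle and, being a subspace, contains it as soon as it contains two of its
  points, so it contains exactly one or all three of them. Hence \<open>{x, y} \<in> H\<close> iff \<open>{z, x}\<close> and
  \<open>{z, y}\<close> are either both in \<open>H\<close> or both outside it, i.e. iff \<open>x\<close> and \<open>y\<close> lie on the same side
  of \<open>A = {z} \<union> {x \<in> X. {z, x} \<in> H}\<close>.\<close>

lemma doubleton_in_P2_iff:
  assumes "a \<noteq> b"
  shows "{a, b} \<in> P2 Y \<longleftrightarrow> a \<in> Y \<and> b \<in> Y"
  using assms unfolding P2_def by auto

lemma P2_elem_obtain:
  assumes "e \<in> P2 Y"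
  obtains a b where "e = {a, b}" "a \<noteq> b" "a \<in> Y" "b \<in> Y"
  using assms unfolding P2_def by (auto simp: card_2_iff)

lemma doubleton_in_split_P2_iff:
  assumes "a \<noteq> b" "a \<in> W" "b \<in> W"
  shows "{a, b} \<in> P2 A \<union> P2 (W - A) \<longleftrightarrow> (a \<in> A \<longleftrightarrow> b \<in> A)"
  using assms by (auto simp: doubleton_in_P2_iff)

lemma subspace_line_subset:
  assumes "subspace P L S" "l \<in> L" "finite l"
    and "p \<in> l \<inter> S" "q \<in> l \<inter> S" "p \<noteq> q"
  shows "l \<subseteq> S"
proof -
  have "card {p, q} \<le> card (l \<inter> S)"
    using assms(3-5) by (intro card_mono) auto
  then have "2 \<le> card (l \<inter> S)"
    using assms(6) by simp
  then show ?thesis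
    using assms(1,2) unfolding subspace_def by blast
qed

lemma hyperplane_triangle_edge_iff:
  assumes hyp: "hyperplane (P2 (insert z X)) (M_lines z X L) H"
    and "z \<notin> X" "x \<in> X" "y \<in> X" "x \<noteq> y"
  shows "{x, y} \<in> H \<longleftrightarrow> ({z, x} \<in> H \<longleftrightarrow> {z, y} \<in> H)"
proof -
  let ?T = "{{z, x}, {z, y}, {x, y}}"
  have T: "?T \<in> M_lines z X L"
    unfolding M_lines_def using assms(3-5) by blast
  have distinct: "{z, x} \<noteq> {z, y}" "{z, x} \<noteq> {x, y}" "{z, y} \<noteq> {x, y}"
    using assms(2-5) by (auto simp: doubleton_eq_iff)
  have closed: "?T \<subseteq> H" if "p \<in> ?T \<inter> H" "q \<in> ?T \<inter> H" "p \<noteq> q" for p q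
    using hyp T that unfolding hyperplane_def
    by (intro subspace_line_subset[of _ "M_lines z X L"]) auto
  have "?T \<inter> H \<noteq> {}"
    using hyp T unfolding hyperplane_def by blast
  then show ?thesis
    using closed distinct by blast
qed

theorem theorem3p5:
  fixes X :: "'a set" and z :: 'a and n :: nat
    and L :: "'a set set set" and H :: "'a set set"
  assumes "finite X" and "card X = n" and "z \<notin> X"
    and "configuration (P2 X) L (n choose 2) (n - 2) (n choose 3) 3"
    and "hyperplane (P2 (insert z X)) (M_lines z X L) H"
  shows "\<exists>A. A \<subseteq> insert z X \<and> H = P2 A \<union> P2 (insert z X - A)"
proof -
  let ?W = "insert z X"
  define A where "A = insert z {x \<in> X. {z, x} \<in> H}"
  have A_sub: "A \<subseteq> ?W"
    unfolding A_def by auto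
  have H_sub: "H \<subseteq> P2 ?W"
    using assms(5) unfolding hyperplane_def subspace_def by blast
  have edge_iff: "{a, b} \<in> H \<longleftrightarrow> (a \<in> A \<longleftrightarrow> b \<in> A)"
    if "a \<noteq> b" "a \<in> ?W" "b \<in> ?W" for a b
    using that hyperplane_triangle_edge_iff[OF assms(5,3)] assms(3)
    unfolding A_def by (auto simp: insert_commute)
  have "e \<in> H \<longleftrightarrow> e \<in> P2 A \<union> P2 (?W - A)" if "e \<in> P2 ?W" for e
    using that
  proof (rule P2_elem_obtain)
    fix a b
    assume "e = {a, b}" "a \<noteq> b" "a \<in> ?W" "b \<in> ?W"
    then show ?thesis
      using edge_iff doubleton_in_split_P2_iff[of a b ?W A] by simp
  qed
  moreover have "P2 A \<union> P2 (?W - A) \<subseteq> P2 ?W"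
    using A_sub unfolding P2_def by auto
  ultimately show ?thesis
    using A_sub H_sub by blast
qed

end
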